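(* Let $H=\sum_{k=1}^{m}\mathbb{Z}u_{k}$ with $u_k\in\mathbb{R}^n$, and suppose $u_1,\dots,u_p$ is a basis of $\mathrm{vect}(H)$, where $p\leq m<n$. Let $v_{p+1},\dots,v_n\in\mathbb{R}^n$ be such that $(u_1,\dots,u_p,v_{p+1},\dots,v_n)$ is a basis of $\mathbb{R}^n$. Then for every $1\leq r\leq n-m$, setting $H'=H+\sum_{k=1}^{r}\mathbb{Z}v_{p+k}$, one has $L(M_H)=L(M_{H'})$, where $M_H$ is computed from the ordered generating family $(u_1,\dots,u_m)$ and $M_{H'}$ from the ordered family $(u_1,\dots,u_p,v_{p+1},\dots,v_{p+r},u_{p+1},\dots,u_m)$. In particular $\Re(\widetilde{\mathrm{dim}}(\overline{H}))=\Re(\widetilde{\mathrm{dim}}(\overline{H'}))$.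
   Context: $\mathrm{vect}(A)$ is the real span of $A$; bars denote closure. Complex dimension: for an additive subgroup $G$ of $\mathbb{R}^n$, $\widetilde{\mathrm{dim}}(G):=p+i(s-p)$, $p=\max\{\dim V: V\text{ a vector subspace},\ V\subset G\}$, $s=\dim\mathrm{vect}(G)$. Definition of $L(M_G)$ for an ordered generating family $w_1,\dots,w_m$ of $G$ whose first $q$ members form a basis of $\mathrm{vect}(G)$: for $k=q+1,\dots,m$ write $w_k=\sum_{j=1}^q\alpha_{k,j}w_j$. Choose $I_k\subset\{1,\dots,q\}$ such that $\{1\}\cup\{\alpha_{k,i}:i\in I_k\}$ is a longest sublist of $1,\alpha_{k,1},\dots,\alpha_{k,q}$ linearly independent over $\mathbb{Q}$. For $j\notin I_k$ write $\alpha_{k,j}=t_{k,j}+\sum_{i\in I_k}\gamma^{(k)}_{j,i}\alpha_{k,i}$ with rational $t_{k,j},\gamma^{(k)}_{j,i}$. Choose $N\in\mathbb{N}^*$ with $m^{(k)}_{i,j}:=N\gamma^{(k)}_{i,j}\in\mathbb{Z}$, and put $w'_{k,j}=Nw_j+\sum_{i\notin I_k}m^{(k)}_{i,j}w_i$ for $j\in I_k$. $M_G$ is the matrix with columns all $w'_{k,j}$, and $L(M_G)=\mathrm{rank}(M_G)$. *)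

theory Defs
  imports "HOL-Analysis.Analysis"
begin

definition zgen :: "(nat \<Rightarrow> 'a::real_vector) \<Rightarrow> nat \<Rightarrow> 'a set" where
  "zgen w m = {(\<Sum>k\<in>{1..m}. of_int (c k) *\<^sub>R w k) | c :: nat \<Rightarrow> int. True}"

definition setplus :: "'a::plus set \<Rightarrow> 'a set \<Rightarrow> 'a set" where
  "setplus A B = {x + y | x y. x \<in> A \<and> y \<in> B}"

definition rat_indep :: "nat set \<Rightarrow> (nat \<Rightarrow> real) \<Rightarrow> bool" where
  "rat_indep S f \<longleftrightarrow>
     (\<forall>c :: nat \<Rightarrow> rat. (\<Sum>i\<in>S. of_rat (c i) * f i) = 0 \<longrightarrow> (\<forall>i\<in>S. c i = 0))"

definition gen_q :: "(nat \<Rightarrow> 'a::euclidean_space) \<Rightarrow> nat \<Rightarrow> nat" where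
  "gen_q w m = dim (span (w ` {1..m}))"

definition alpha :: "(nat \<Rightarrow> 'a::euclidean_space) \<Rightarrow> nat \<Rightarrow> nat \<Rightarrow> nat \<Rightarrow> real" where
  "alpha w q k = (SOME a. w k = (\<Sum>j\<in>{1..q}. a j *\<^sub>R w j))"

definition alist :: "(nat \<Rightarrow> 'a::euclidean_space) \<Rightarrow> nat \<Rightarrow> nat \<Rightarrow> nat \<Rightarrow> real" where
  "alist w q k i = (if i = 0 then 1 else alpha w q k i)"

definition good_I :: "(nat \<Rightarrow> 'a::euclidean_space) \<Rightarrow> nat \<Rightarrow> nat \<Rightarrow> nat set \<Rightarrow> bool" where
  "good_I w q k I \<longleftrightarrow> I \<subseteq> {1..q} \<and> rat_indep (insert 0 I) (alist w q k) \<and>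
     (\<forall>J. J \<subseteq> {1..q} \<and> rat_indep (insert 0 J) (alist w q k) \<longrightarrow> card J \<le> card I)"

definition Ik :: "(nat \<Rightarrow> 'a::euclidean_space) \<Rightarrow> nat \<Rightarrow> nat \<Rightarrow> nat set" where
  "Ik w q k = (SOME I. good_I w q k I)"

definition tgamma :: "(nat \<Rightarrow> 'a::euclidean_space) \<Rightarrow> nat \<Rightarrow> nat \<Rightarrow> nat \<Rightarrow> rat \<times> (nat \<Rightarrow> rat)" where
  "tgamma w q k j = (SOME (t, g). alpha w q k j =
        of_rat t + (\<Sum>i\<in>Ik w q k. of_rat (g i) * alpha w q k i))"

definition gamma :: "(nat \<Rightarrow> 'a::euclidean_space) \<Rightarrow> nat \<Rightarrow> nat \<Rightarrow> nat \<Rightarrow> nat \<Rightarrow> rat" where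
  "gamma w q k j i = snd (tgamma w q k j) i"

definition Nk :: "(nat \<Rightarrow> 'a::euclidean_space) \<Rightarrow> nat \<Rightarrow> nat \<Rightarrow> nat" where
  "Nk w q k = (SOME N. N > 0 \<and>
      (\<forall>j\<in>{1..q} - Ik w q k. \<forall>i\<in>Ik w q k. of_nat N * gamma w q k j i \<in> \<int>))"

definition mk :: "(nat \<Rightarrow> 'a::euclidean_space) \<Rightarrow> nat \<Rightarrow> nat \<Rightarrow> nat \<Rightarrow> nat \<Rightarrow> rat" where
  "mk w q k i j = of_nat (Nk w q k) * gamma w q k i j"

definition wprime :: "(nat \<Rightarrow> 'a::euclidean_space) \<Rightarrow> nat \<Rightarrow> nat \<Rightarrow> nat \<Rightarrow> 'a" where
  "wprime w q k j = real (Nk w q k) *\<^sub>R w j +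
      (\<Sum>i\<in>{1..q} - Ik w q k. of_rat (mk w q k i j) *\<^sub>R w i)"

definition M_cols :: "(nat \<Rightarrow> 'a::euclidean_space) \<Rightarrow> nat \<Rightarrow> 'a set" where
  "M_cols w m = (let q = gen_q w m in
      {wprime w q k j | k j. k \<in> {q+1..m} \<and> j \<in> Ik w q k})"

definition L_M :: "(nat \<Rightarrow> 'a::euclidean_space) \<Rightarrow> nat \<Rightarrow> nat" where
  "L_M w m = dim (span (M_cols w m))"

definition cdim :: "'a::euclidean_space set \<Rightarrow> complex" where
  "cdim G = (let p = (GREATEST d. \<exists>V. subspace V \<and> V \<subseteq> G \<and> dim V = d);
                 s = dim (span G)
             in Complex (real p) (real s - real p))"

end

theory Submission
  imports Defs
begin

text \<open>
  The new generators v_(p+1), ..., v_(p+r) are linearly independent from vect(H), and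
  neither invariant notices them.

  For L: in the reordered family the basis of vect(H') is u_1, ..., u_p, v_(p+1), ..., v_(p+r),
  and each u_k with k > p expands on it with its old coefficients followed by r zeros. A zero
  never belongs to a Q-independent sublist containing 1, so the sets I_k, the rational
  relations, the integer N and hence the columns of M_H' are those of M_H.

  For the real part of the complex dimension, i.e. the largest dimension of a vector subspace
  inside the closure: the dual-basis functionals F_k of the v_(p+k) vanish on H and are
  integer-valued on H', hence on its closure, so they vanish on every vector subspace inside
  closure H'. There the projection along the v_(p+k), which maps closure H' into closure H,
  is the identity.
\<close>

lemma rat_indep_cong:
  assumes "\<And>i. i \<in> S \<Longrightarrow> f i = g i"
  shows "rat_indep S f = rat_indep S g"
  unfolding rat_indep_def using assms by (simp cong: sum.cong)

lemma not_rat_indep_zero: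
  assumes "i \<in> S" "f i = 0"
  shows "\<not> rat_indep S f"
proof
  assume indep: "rat_indep S f"
  define c :: "nat \<Rightarrow> rat" where "c x = (if x = i then 1 else 0)" for x
  have "(\<Sum>x\<in>S. of_rat (c x) * f x) = 0"
    using assms by (auto simp: c_def intro!: sum.neutral)
  then have "c i = 0" using indep \<open>i \<in> S\<close> unfolding rat_indep_def by blast
  then show False by (simp add: c_def)
qed

lemma rat_indep_affine_relation:
  assumes indep: "rat_indep (insert 0 I) f" and "finite I" "0 \<notin> I" "f 0 = 1"
    and rel: "of_rat t + (\<Sum>i\<in>I. of_rat (g i) * f i) = 0" and "i \<in> I"
  shows "g i = 0"
proof -
  define c where "c x = (if x = 0 then t else g x)" for x
  have "(\<Sum>x\<in>I. of_rat (c x) * f x) = (\<Sum>x\<in>I. of_rat (g x) * f x)"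
    using \<open>0 \<notin> I\<close> by (intro sum.cong) (auto simp: c_def)
  then have "(\<Sum>x\<in>insert 0 I. of_rat (c x) * f x) = of_rat t + (\<Sum>x\<in>I. of_rat (g x) * f x)"
    using assms(2-4) by (simp add: c_def)
  then have "c i = 0" using indep rel \<open>i \<in> I\<close> unfolding rat_indep_def by auto
  then show ?thesis using assms(3,6) by (auto simp: c_def split: if_splits)
qed

lemma good_I_exists: "\<exists>I. good_I w q k I"
proof -
  let ?P = "\<lambda>J. J \<subseteq> {1..q} \<and> rat_indep (insert 0 J) (alist w q k)"
  have empty: "?P {}" unfolding rat_indep_def alist_def by simp
  have bound: "\<forall>J. ?P J \<longrightarrow> card J < q + 1"
  proof (intro allI impI)
    fix J assume "?P J"
    then have "card J \<le> card {1..q}" by (intro card_mono) auto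
    then show "card J < q + 1" by simp
  qed
  obtain I where "?P I" "\<forall>J. ?P J \<longrightarrow> card J \<le> card I"
    using ex_has_greatest_nat[OF empty bound] by blast
  then show ?thesis unfolding good_I_def by blast
qed

lemma good_I_Ik: "good_I w q k (Ik w q k)"
  unfolding Ik_def using good_I_exists by (rule someI_ex)

lemma Ik_subset: "Ik w q k \<subseteq> {1..q}"
  using good_I_Ik unfolding good_I_def by blast

lemma rat_indep_Ik: "rat_indep (insert 0 (Ik w q k)) (alist w q k)"
  using good_I_Ik unfolding good_I_def by blast

locale coefficient_padding =
  fixes w w2 :: "nat \<Rightarrow> 'a::euclidean_space" and q q2 k k2 :: nat
  assumes q_le: "q \<le> q2"
    and alpha_padded: "\<And>j. j \<in> {1..q2} \<Longrightarrow> alpha w2 q2 k2 j = (if j \<le> q then alpha w q k j else 0)"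
    and agree: "\<And>j. j \<in> {1..q} \<Longrightarrow> w2 j = w j"
begin

lemma alist_padded: "i \<le> q2 \<Longrightarrow> alist w2 q2 k2 i = (if i \<le> q then alist w q k i else 0)"
  using alpha_padded[of i] by (auto simp: alist_def)

lemma rat_indep_padded_iff:
  "(J \<subseteq> {1..q2} \<and> rat_indep (insert 0 J) (alist w2 q2 k2)) \<longleftrightarrow>
   (J \<subseteq> {1..q} \<and> rat_indep (insert 0 J) (alist w q k))"
proof -
  have cong: "rat_indep (insert 0 J) (alist w2 q2 k2) = rat_indep (insert 0 J) (alist w q k)"
    if "J \<subseteq> {1..q}" for J
    using that q_le by (intro rat_indep_cong) (auto simp: alist_padded)
  have sub: "J \<subseteq> {1..q}" if "J \<subseteq> {1..q2}" "rat_indep (insert 0 J) (alist w2 q2 k2)"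
  proof
    fix i assume "i \<in> J"
    then have "alist w2 q2 k2 i \<noteq> 0" using not_rat_indep_zero that(2) by blast
    then show "i \<in> {1..q}" using \<open>i \<in> J\<close> that(1) alist_padded[of i] by (auto split: if_splits)
  qed
  show ?thesis
  proof
    assume "J \<subseteq> {1..q2} \<and> rat_indep (insert 0 J) (alist w2 q2 k2)"
    with sub have "J \<subseteq> {1..q}" by blast
    with \<open>J \<subseteq> {1..q2} \<and> _\<close> show "J \<subseteq> {1..q} \<and> rat_indep (insert 0 J) (alist w q k)"
      using cong by blast
  next
    assume "J \<subseteq> {1..q} \<and> rat_indep (insert 0 J) (alist w q k)"
    then show "J \<subseteq> {1..q2} \<and> rat_indep (insert 0 J) (alist w2 q2 k2)"
      using cong q_le by auto
  qed
qed

lemma Ik_eq: "Ik w2 q2 k2 = Ik w q k"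
proof -
  have "good_I w2 q2 k2 = good_I w q k"
    by (intro ext) (simp only: good_I_def conj_assoc[symmetric] rat_indep_padded_iff)
  then show ?thesis unfolding Ik_def by simp
qed

lemma tgamma_eq:
  assumes "j \<in> {1..q}"
  shows "tgamma w2 q2 k2 j = tgamma w q k j"
proof -
  have "(\<Sum>i\<in>Ik w q k. of_rat (g i) * alpha w2 q2 k2 i) = (\<Sum>i\<in>Ik w q k. of_rat (g i) * alpha w q k i)"
    for g :: "nat \<Rightarrow> rat"
    using Ik_subset[of w q k] q_le by (intro sum.cong) (auto simp: alpha_padded)
  moreover have "alpha w2 q2 k2 j = alpha w q k j" using assms q_le by (auto simp: alpha_padded)
  ultimately show ?thesis unfolding tgamma_def Ik_eq by simp
qed

lemma gamma_eq: "j \<in> {1..q} \<Longrightarrow> gamma w2 q2 k2 j i = gamma w q k j i"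
  by (simp add: gamma_def tgamma_eq)

lemma gamma_padding_zero:
  assumes j: "j \<in> {q+1..q2}" and i: "i \<in> Ik w q k"
  shows "gamma w2 q2 k2 j i = 0"
proof -
  let ?P = "\<lambda>(t, g). alpha w2 q2 k2 j = of_rat t + (\<Sum>i\<in>Ik w2 q2 k2. of_rat (g i) * alpha w2 q2 k2 i)"
  obtain t g where tg: "tgamma w2 q2 k2 j = (t, g)" by fastforce
  have zero: "alpha w2 q2 k2 j = 0" using alpha_padded[of j] j by auto
  then have "?P (0, \<lambda>_. 0)" by simp
  then have "?P (tgamma w2 q2 k2 j)" unfolding tgamma_def by (rule someI)
  moreover have "alpha w2 q2 k2 i = alist w q k i" if "i \<in> Ik w q k" for i
    using that Ik_subset[of w q k] q_le by (auto simp: alpha_padded alist_def)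
  ultimately have "of_rat t + (\<Sum>i\<in>Ik w q k. of_rat (g i) * alist w q k i) = 0"
    using zero by (simp add: tg Ik_eq)
  moreover have "finite (Ik w q k)" "0 \<notin> Ik w q k"
    using Ik_subset[of w q k] finite_subset by auto
  ultimately have "g i = 0"
    using rat_indep_affine_relation[OF rat_indep_Ik _ _ _ _ i] by (simp add: alist_def)
  then show ?thesis by (simp add: gamma_def tg)
qed

lemma diff_Ik_split: "{1..q2} - Ik w q k = ({1..q} - Ik w q k) \<union> {q+1..q2}"
  using Ik_subset[of w q k] q_le by auto

lemma Nk_eq: "Nk w2 q2 k2 = Nk w q k"
proof -
  have "(\<forall>j\<in>{1..q2} - Ik w q k. \<forall>i\<in>Ik w q k. of_nat N * gamma w2 q2 k2 j i \<in> \<int>) \<longleftrightarrow>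
        (\<forall>j\<in>{1..q} - Ik w q k. \<forall>i\<in>Ik w q k. of_nat N * gamma w q k j i \<in> \<int>)" for N :: nat
    unfolding diff_Ik_split ball_Un by (auto simp: gamma_eq gamma_padding_zero)
  then show ?thesis unfolding Nk_def Ik_eq by simp
qed

lemma wprime_eq:
  assumes j: "j \<in> Ik w q k"
  shows "wprime w2 q2 k2 j = wprime w q k j"
proof -
  let ?f = "\<lambda>i. of_rat (mk w2 q2 k2 i j) *\<^sub>R w2 i"
  have "(\<Sum>i\<in>{1..q2} - Ik w q k. ?f i) = (\<Sum>i\<in>{1..q} - Ik w q k. ?f i) + (\<Sum>i\<in>{q+1..q2}. ?f i)"
    unfolding diff_Ik_split by (rule sum.union_disjoint) auto
  also have "(\<Sum>i\<in>{q+1..q2}. ?f i) = 0"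
    using j by (simp add: mk_def gamma_padding_zero)
  also have "(\<Sum>i\<in>{1..q} - Ik w q k. ?f i) = (\<Sum>i\<in>{1..q} - Ik w q k. of_rat (mk w q k i j) *\<^sub>R w i)"
    by (intro sum.cong) (auto simp: mk_def Nk_eq gamma_eq agree)
  moreover have "w2 j = w j" using j Ik_subset agree by blast
  ultimately show ?thesis unfolding wprime_def Ik_eq by (simp add: Nk_eq)
qed

end

lemma M_cols_padding:
  fixes w w2 :: "nat \<Rightarrow> 'a::euclidean_space"
  assumes "gen_q w m = q" "gen_q w2 (m + s) = q + s"
    and pad: "\<And>k. k \<in> {q+1..m} \<Longrightarrow> coefficient_padding w w2 q (q + s) k (k + s)"
  shows "M_cols w2 (m + s) = M_cols w m"
proof -
  have "{wprime w2 (q+s) k j | k j. k \<in> {q+s+1..m+s} \<and> j \<in> Ik w2 (q+s) k} =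
        {wprime w q k j | k j. k \<in> {q+1..m} \<and> j \<in> Ik w q k}" (is "?L = ?R")
  proof
    show "?L \<subseteq> ?R"
    proof clarify
      fix k j assume k: "k \<in> {q+s+1..m+s}" and j: "j \<in> Ik w2 (q+s) k"
      define k0 where "k0 = k - s"
      have k0: "k0 \<in> {q+1..m}" and kk: "k = k0 + s" using k by (auto simp: k0_def)
      note padk = pad[OF k0]
      have "j \<in> Ik w q k0" using j coefficient_padding.Ik_eq[OF padk] by (simp add: kk)
      moreover have "wprime w2 (q+s) k j = wprime w q k0 j"
        using coefficient_padding.wprime_eq[OF padk calculation] by (simp add: kk)
      ultimately show "\<exists>k' j'. wprime w2 (q+s) k j = wprime w q k' j' \<and> k' \<in> {q+1..m} \<and> j' \<in> Ik w q k'"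
        using k0 by blast
    qed
    show "?R \<subseteq> ?L"
    proof clarify
      fix k j assume k: "k \<in> {q+1..m}" and j: "j \<in> Ik w q k"
      note padk = pad[OF k]
      have "k + s \<in> {q+s+1..m+s}" using k by auto
      moreover have "j \<in> Ik w2 (q+s) (k+s)" using j coefficient_padding.Ik_eq[OF padk] by simp
      moreover have "wprime w q k j = wprime w2 (q+s) (k+s) j"
        using coefficient_padding.wprime_eq[OF padk j] by simp
      ultimately show "\<exists>k' j'. wprime w q k j = wprime w2 (q+s) k' j' \<and> k' \<in> {q+s+1..m+s} \<and> j' \<in> Ik w2 (q+s) k'"
        by blast
    qed
  qed
  then show ?thesis unfolding M_cols_def Let_def assms(1,2) by simp
qed

lemma sum_scaleR_coefficients_unique:
  fixes f :: "nat \<Rightarrow> 'a::euclidean_space"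
  assumes "inj_on f J" "independent (f ` J)"
    and eq: "(\<Sum>j\<in>J. a j *\<^sub>R f j) = (\<Sum>j\<in>J. b j *\<^sub>R f j)" and "j \<in> J"
  shows "a j = b j"
proof -
  define c where "c v = a (inv_into J f v) - b (inv_into J f v)" for v
  have "(\<Sum>v\<in>f ` J. c v *\<^sub>R v) = (\<Sum>j\<in>J. (a j - b j) *\<^sub>R f j)"
    using assms(1) by (simp add: sum.reindex c_def cong: sum.cong)
  also have "\<dots> = 0" using eq by (simp add: scaleR_diff_left sum_subtractf)
  finally have "c (f j) = 0" using assms(2,4) unfolding independent_explicit by blast
  then show ?thesis using assms(1,4) by (simp add: c_def)
qed

lemma span_image_sum_repr:
  assumes "finite J" "inj_on f J" "x \<in> span (f ` J)"
  shows "\<exists>a. x = (\<Sum>j\<in>J. a j *\<^sub>R f j)"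
proof -
  obtain c where "x = (\<Sum>v\<in>f ` J. c v *\<^sub>R v)"
    using assms(1,3) span_finite[of "f ` J"] by auto
  then have "x = (\<Sum>j\<in>J. c (f j) *\<^sub>R f j)" using assms(2) by (simp add: sum.reindex)
  then show ?thesis by (intro exI[of _ "\<lambda>j. c (f j)"])
qed

lemma alpha_repr:
  assumes "inj_on w {1..q}" "w k \<in> span (w ` {1..q})"
  shows "w k = (\<Sum>j\<in>{1..q}. alpha w q k j *\<^sub>R w j)"
proof -
  have "\<exists>a. w k = (\<Sum>j\<in>{1..q}. a j *\<^sub>R w j)"
    using span_image_sum_repr[OF _ assms] by simp
  then show ?thesis unfolding alpha_def by (rule someI_ex)
qed

lemma alpha_eqI:
  assumes "inj_on w {1..q}" "independent (w ` {1..q})"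
    and "w k = (\<Sum>j\<in>{1..q}. a j *\<^sub>R w j)" "j \<in> {1..q}"
  shows "alpha w q k j = a j"
proof -
  have "w k \<in> span (w ` {1..q})"
    unfolding assms(3) by (intro span_sum span_scale span_base) auto
  then have "(\<Sum>j\<in>{1..q}. alpha w q k j *\<^sub>R w j) = (\<Sum>j\<in>{1..q}. a j *\<^sub>R w j)"
    using alpha_repr[OF assms(1)] assms(3) by simp
  then show ?thesis by (rule sum_scaleR_coefficients_unique[OF assms(1,2) _ assms(4)])
qed

lemma gen_q_eq:
  assumes "inj_on w {1..q}" "independent (w ` {1..q})" "q \<le> m"
    and "\<And>k. k \<in> {1..m} \<Longrightarrow> w k \<in> span (w ` {1..q})"
  shows "gen_q w m = q"
proof -
  have span_eq: "span (w ` {1..m}) = span (w ` {1..q})"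
  proof
    show "span (w ` {1..m}) \<subseteq> span (w ` {1..q})"
      using assms(4) by (intro span_minimal) auto
    show "span (w ` {1..q}) \<subseteq> span (w ` {1..m})"
      using assms(3) by (intro span_mono image_mono) auto
  qed
  then show ?thesis
    unfolding gen_q_def span_eq dim_span dim_eq_card_independent[OF assms(2)]
    using card_image[OF assms(1)] by simp
qed

lemma coefficient_padding_insert:
  fixes u w :: "nat \<Rightarrow> 'a::euclidean_space"
  assumes u: "inj_on u {1..p}" "u k \<in> span (u ` {1..p})"
    and w: "inj_on w {1..p+r}" "independent (w ` {1..p+r})"
    and agree: "\<And>j. j \<in> {1..p} \<Longrightarrow> w j = u j" and shifted: "w (k + r) = u k"
  shows "coefficient_padding u w p (p + r) k (k + r)"
proof -
  define a where "a j = (if j \<le> p then alpha u p k j else 0)" for j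
  have "{1..p+r} = {1..p} \<union> {p+1..p+r}" by auto
  then have "(\<Sum>j\<in>{1..p+r}. a j *\<^sub>R w j) = (\<Sum>j\<in>{1..p}. a j *\<^sub>R w j) + (\<Sum>j\<in>{p+1..p+r}. a j *\<^sub>R w j)"
    by (simp add: sum.union_disjoint)
  also have "(\<Sum>j\<in>{p+1..p+r}. a j *\<^sub>R w j) = 0" by (simp add: a_def)
  also have "(\<Sum>j\<in>{1..p}. a j *\<^sub>R w j) = (\<Sum>j\<in>{1..p}. alpha u p k j *\<^sub>R u j)"
    by (intro sum.cong) (auto simp: a_def agree)
  also have "\<dots> = w (k + r)" using alpha_repr[OF u] shifted by simp
  finally have "alpha w (p+r) (k+r) j = a j" if "j \<in> {1..p+r}" for j
    using alpha_eqI[OF w _ that] by simp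
  then show ?thesis using agree by unfold_locales (auto simp: a_def)
qed

lemma L_M_insert_independent:
  fixes u w :: "nat \<Rightarrow> 'a::euclidean_space"
  assumes "p \<le> m" and u: "inj_on u {1..p}" "independent (u ` {1..p})"
    and span_u: "\<And>k. k \<in> {1..m} \<Longrightarrow> u k \<in> span (u ` {1..p})"
    and w: "inj_on w {1..p+r}" "independent (w ` {1..p+r})"
    and agree: "\<And>j. j \<in> {1..p} \<Longrightarrow> w j = u j"
    and shifted: "\<And>k. k \<in> {p+1..m} \<Longrightarrow> w (k + r) = u k"
  shows "L_M w (m + r) = L_M u m"
proof -
  have "gen_q u m = p" using gen_q_eq[OF u \<open>p \<le> m\<close> span_u] .
  moreover have "gen_q w (m + r) = p + r"
  proof (rule gen_q_eq[OF w])
    have "u ` {1..p} = w ` {1..p}" using agree by (intro image_cong) auto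
    also have "\<dots> \<subseteq> w ` {1..p+r}" by (intro image_mono) auto
    finally have span_sub: "span (u ` {1..p}) \<subseteq> span (w ` {1..p+r})" by (rule span_mono)
    show "p + r \<le> m + r" using \<open>p \<le> m\<close> by simp
    fix k assume k: "k \<in> {1..m+r}"
    show "w k \<in> span (w ` {1..p+r})"
    proof (cases "k \<le> p + r")
      case True
      with k show ?thesis by (intro span_base) auto
    next
      case False
      with k have "k - r \<in> {p+1..m}" and "r \<le> k" by auto
      then have "w k = u (k - r)" and "k - r \<in> {1..m}" using shifted[of "k - r"] by auto
      then show ?thesis using span_u span_sub by auto
    qed
  qed
  moreover have "coefficient_padding u w p (p + r) k (k + r)" if k: "k \<in> {p+1..m}" for k
  proof (rule coefficient_padding_insert[OF u(1) _ w agree shifted[OF k]])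
    show "u k \<in> span (u ` {1..p})" using k \<open>p \<le> m\<close> span_u by simp
  qed
  ultimately have "M_cols w (m + r) = M_cols u m" by (rule M_cols_padding)
  then show ?thesis unfolding L_M_def by simp
qed

lemma inj_on_independent_subfamily:
  assumes "inj_on b B" "independent (b ` B)" "A \<subseteq> B" "\<And>i. i \<in> A \<Longrightarrow> w i = b i"
  shows "inj_on w A" "independent (w ` A)"
proof -
  have "w ` A = b ` A" using assms(4) by (rule image_cong[OF refl])
  then show "independent (w ` A)"
    using assms(2,3) by (simp add: independent_mono image_mono)
  show "inj_on w A"
    using inj_on_subset[OF assms(1,3)] by (subst inj_on_cong[OF assms(4)])
qed

lemma zgen_zero: "0 \<in> zgen w m"
  unfolding zgen_def by (intro CollectI exI[of _ "\<lambda>_. 0"]) simp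

lemma zgen_mem:
  assumes "i \<in> {1..m}"
  shows "w i \<in> zgen w m"
proof -
  have "(\<Sum>k\<in>{1..m}. of_int (if k = i then 1 else 0) *\<^sub>R w k) = (\<Sum>k\<in>{1..m}. if k = i then w k else 0)"
    by (intro sum.cong) auto
  also have "\<dots> = w i" using assms by simp
  finally show ?thesis
    unfolding zgen_def by (intro CollectI exI[of _ "\<lambda>k. if k = i then 1 else 0"]) simp
qed

lemma subset_setplus_zgen: "H \<subseteq> setplus H (zgen w m)"
  unfolding setplus_def using zgen_zero by force

lemma linear_Ints_on_subspace_zero:
  fixes f :: "'a::real_vector \<Rightarrow> real"
  assumes "linear f" "subspace V" "f ` V \<subseteq> \<int>" "x \<in> V"
  shows "f x = 0"
proof (rule ccontr)
  assume "f x \<noteq> 0"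
  then have "(1 / 2 :: real) = f ((1 / (2 * f x)) *\<^sub>R x)" by (simp add: linear_scale[OF assms(1)])
  also have "(1 / (2 * f x)) *\<^sub>R x \<in> V" using assms(2,4) by (rule subspace_mul)
  then have "f ((1 / (2 * f x)) *\<^sub>R x) \<in> \<int>" using assms(3) by blast
  finally have "(1 / 2 :: real) \<in> \<int>" .
  then show False using fraction_not_in_Ints[of 2 1] by simp
qed

lemma dual_basis_exists:
  fixes b :: "nat \<Rightarrow> 'a::euclidean_space"
  assumes "inj_on b I" "independent (b ` I)"
  shows "\<exists>F :: nat \<Rightarrow> 'a \<Rightarrow> real. \<forall>i\<in>I. linear (F i) \<and> (\<forall>j\<in>I. F i (b j) = (if i = j then 1 else 0))"
proof (rule bchoice, rule ballI)
  fix i assume "i \<in> I"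
  obtain g where "linear g" and g: "\<forall>x\<in>b ` I. g x = (if x = b i then 1 else (0::real))"
    using linear_independent_extend[OF assms(2), where f = "\<lambda>x. if x = b i then 1 else 0"] by blast
  moreover have "\<forall>j\<in>I. g (b j) = (if i = j then 1 else 0)"
    using g \<open>i \<in> I\<close> inj_on_eq_iff[OF assms(1)] by auto
  ultimately show "\<exists>g :: 'a \<Rightarrow> real. linear g \<and> (\<forall>j\<in>I. g (b j) = (if i = j then 1 else 0))" by blast
qed

lemma subspace_subset_closure_of_lattice_extension:
  fixes H :: "'a::euclidean_space set" and e :: "nat \<Rightarrow> 'a" and F :: "nat \<Rightarrow> 'a \<Rightarrow> real"
  assumes F: "\<And>k. k \<in> {1..r} \<Longrightarrow> linear (F k)"
    and dual: "\<And>k j. k \<in> {1..r} \<Longrightarrow> j \<in> {1..r} \<Longrightarrow> F k (e j) = (if k = j then 1 else 0)"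
    and vanish: "\<And>k h. k \<in> {1..r} \<Longrightarrow> h \<in> H \<Longrightarrow> F k h = 0"
    and V: "subspace V" "V \<subseteq> closure (setplus H (zgen e r))"
  shows "V \<subseteq> closure H"
proof
  define H' where "H' = setplus H (zgen e r)"
  define P where "P x = x - (\<Sum>k\<in>{1..r}. F k x *\<^sub>R e k)" for x
  have cont: "isCont (F k) x" if "k \<in> {1..r}" for k x
    using F[OF that] by (simp add: linear_continuous_at linear_conv_bounded_linear)
  have F_H': "F k x = of_int (c k)"
    if "k \<in> {1..r}" "h \<in> H" "x = h + (\<Sum>j\<in>{1..r}. of_int (c j) *\<^sub>R e j)" for k h x c
  proof -
    have "F k x = (\<Sum>j\<in>{1..r}. of_int (c j) * F k (e j))"
      using that by (simp add: linear_add[OF F] linear_sum[OF F] linear_scale[OF F] vanish)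
    also have "\<dots> = (\<Sum>j\<in>{1..r}. if j = k then of_int (c k) else 0)"
      using that(1) by (intro sum.cong) (auto simp: dual)
    also have "\<dots> = of_int (c k)" using that(1) by simp
    finally show ?thesis .
  qed
  have P_H': "P x \<in> H" if "x \<in> H'" for x
  proof -
    obtain h c where hc: "h \<in> H" "x = h + (\<Sum>j\<in>{1..r}. of_int (c j) *\<^sub>R e j)"
      using \<open>x \<in> H'\<close> unfolding H'_def setplus_def zgen_def by blast
    then have "(\<Sum>k\<in>{1..r}. F k x *\<^sub>R e k) = (\<Sum>k\<in>{1..r}. of_int (c k) *\<^sub>R e k)"
      using F_H' by (intro sum.cong) auto
    then show ?thesis using hc by (simp add: P_def)
  qed
  have "isCont P x" for x
    unfolding P_def by (intro continuous_intros cont)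
  moreover have "H' \<subseteq> P -` closure H" using P_H' closure_subset by blast
  ultimately have P_closure: "closure H' \<subseteq> P -` closure H"
    by (intro closure_minimal continuous_closed_vimage closed_closure)
  have Ints_closure: "closure H' \<subseteq> F k -` \<int>" if k: "k \<in> {1..r}" for k
  proof (intro closure_minimal continuous_closed_vimage closed_Ints cont[OF k])
    show "H' \<subseteq> F k -` \<int>"
      unfolding H'_def setplus_def zgen_def using F_H'[OF k] by auto
  qed
  fix x assume "x \<in> V"
  have "F k x = 0" if "k \<in> {1..r}" for k
  proof (rule linear_Ints_on_subspace_zero[OF F[OF that] V(1) _ \<open>x \<in> V\<close>])
    show "F k ` V \<subseteq> \<int>" using V(2) Ints_closure[OF that] unfolding H'_def by blast
  qed
  then have "P x = x" by (simp add: P_def)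
  then show "x \<in> closure H" using P_closure V(2) \<open>x \<in> V\<close> unfolding H'_def by auto
qed

lemma Re_cdim_eqI:
  assumes "\<And>V. subspace V \<Longrightarrow> V \<subseteq> A \<longleftrightarrow> V \<subseteq> B"
  shows "Re (cdim A) = Re (cdim B)"
proof -
  have "(\<lambda>d. \<exists>V. subspace V \<and> V \<subseteq> A \<and> dim V = d) = (\<lambda>d. \<exists>V. subspace V \<and> V \<subseteq> B \<and> dim V = d)"
    using assms by (intro ext) blast
  then show ?thesis by (simp add: cdim_def Let_def)
qed

lemma Re_cdim_closure_add_lattice:
  fixes b e :: "nat \<Rightarrow> 'a::euclidean_space"
  assumes b: "inj_on b {1..n}" "independent (b ` {1..n})" and "p + r \<le> n"
    and H: "H \<subseteq> span (b ` {1..p})" and e: "\<And>k. k \<in> {1..r} \<Longrightarrow> e k = b (p + k)"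
  shows "Re (cdim (closure H)) = Re (cdim (closure (setplus H (zgen e r))))"
proof (rule Re_cdim_eqI)
  obtain F :: "nat \<Rightarrow> 'a \<Rightarrow> real" where
    F: "\<forall>i\<in>{1..n}. linear (F i) \<and> (\<forall>j\<in>{1..n}. F i (b j) = (if i = j then 1 else 0))"
    using dual_basis_exists[OF b] by blast
  have idx: "p + k \<in> {1..n}" if "k \<in> {1..r}" for k
    using that \<open>p + r \<le> n\<close> by auto
  have vanish: "F (p + k) h = 0" if k: "k \<in> {1..r}" and "h \<in> H" for k h
  proof (rule linear_eq_0_on_span[of "F (p + k)"])
    show "linear (F (p + k))" using F idx[OF k] by blast
    show "h \<in> span (b ` {1..p})" using H \<open>h \<in> H\<close> by blast
  next
    fix x assume "x \<in> b ` {1..p}"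
    then obtain j where "j \<in> {1..p}" "x = b j" by blast
    then show "F (p + k) x = 0" using F idx[OF k] \<open>p + r \<le> n\<close> k by auto
  qed
  fix V :: "'a set" assume "subspace V"
  show "V \<subseteq> closure H \<longleftrightarrow> V \<subseteq> closure (setplus H (zgen e r))"
  proof
    assume "V \<subseteq> closure H"
    then show "V \<subseteq> closure (setplus H (zgen e r))"
      using closure_mono[OF subset_setplus_zgen] by blast
  next
    assume V: "V \<subseteq> closure (setplus H (zgen e r))"
    show "V \<subseteq> closure H"
    proof (rule subspace_subset_closure_of_lattice_extension[OF _ _ vanish \<open>subspace V\<close> V])
      show "linear (F (p + k))" if "k \<in> {1..r}" for k using F idx[OF that] by blast
      show "F (p + k) (e j) = (if k = j then 1 else 0)" if "k \<in> {1..r}" "j \<in> {1..r}" for k j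
        using F idx[OF that(1)] idx[OF that(2)] e[OF that(2)] by auto
    qed
  qed
qed

theorem lemma3p2:
  fixes u v :: "nat \<Rightarrow> real ^ 'n" and m p :: nat
  assumes "p \<le> m" and "m < CARD('n)"
    and "inj_on u {1..p}" and "independent (u ` {1..p})"
    and "span (u ` {1..p}) = span (zgen u m)"
    and "inj_on (\<lambda>i. if i \<le> p then u i else v i) {1..CARD('n)}"
    and "independent ((\<lambda>i. if i \<le> p then u i else v i) ` {1..CARD('n)})"
    and "span ((\<lambda>i. if i \<le> p then u i else v i) ` {1..CARD('n)}) = UNIV"
  shows "\<forall>r. 1 \<le> r \<and> r \<le> CARD('n) - m \<longrightarrow>
     (let H = zgen u m;
          H' = setplus H (zgen (\<lambda>k. v (p + k)) r);
          w' = (\<lambda>i. if i \<le> p then u i else if i \<le> p + r then v i else u (i - r))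
      in L_M u m = L_M w' (m + r) \<and>
         Re (cdim (closure H)) = Re (cdim (closure H')))"
proof (intro allI impI)
  fix r assume "1 \<le> r \<and> r \<le> CARD('n) - m"
  then have "p + r \<le> CARD('n)" using assms(1,2) by linarith
  define b where "b = (\<lambda>i. if i \<le> p then u i else v i)"
  define w' where "w' = (\<lambda>i. if i \<le> p then u i else if i \<le> p + r then v i else u (i - r))"
  have b: "inj_on b {1..CARD('n)}" "independent (b ` {1..CARD('n)})"
    using assms(6,7) unfolding b_def .
  have span_u: "span (u ` {1..p}) = span (b ` {1..p})"
    unfolding b_def by (intro arg_cong[where f = span] image_cong) auto
  have zgen_span: "zgen u m \<subseteq> span (u ` {1..p})"
    unfolding assms(5) by (rule span_superset)
  have "{1..p+r} \<subseteq> {1..CARD('n)}" using \<open>p + r \<le> CARD('n)\<close> by auto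
  moreover have "w' i = b i" if "i \<in> {1..p+r}" for i using that by (simp add: w'_def b_def)
  ultimately have w': "inj_on w' {1..p+r}" "independent (w' ` {1..p+r})"
    using inj_on_independent_subfamily[OF b] by blast+
  have "L_M w' (m + r) = L_M u m"
  proof (rule L_M_insert_independent[OF assms(1,3,4) _ w'])
    show "u k \<in> span (u ` {1..p})" if "k \<in> {1..m}" for k
      using zgen_span zgen_mem[OF that] by blast
  qed (auto simp: w'_def)
  moreover have "Re (cdim (closure (zgen u m))) = Re (cdim (closure (setplus (zgen u m) (zgen (\<lambda>k. v (p + k)) r))))"
  proof (rule Re_cdim_closure_add_lattice[OF b \<open>p + r \<le> CARD('n)\<close>])
    show "zgen u m \<subseteq> span (b ` {1..p})" using zgen_span span_u by simp
    show "v (p + k) = b (p + k)" if "k \<in> {1..r}" for k using that by (simp add: b_def)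
  qed
  ultimately show "let H = zgen u m;
          H' = setplus H (zgen (\<lambda>k. v (p + k)) r);
          w' = (\<lambda>i. if i \<le> p then u i else if i \<le> p + r then v i else u (i - r))
      in L_M u m = L_M w' (m + r) \<and> Re (cdim (closure H)) = Re (cdim (closure H'))"
    unfolding Let_def w'_def by simp
qed

end
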